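(* For all integers $q\ge 2$ and $m\ge 1$, the fractal star matrix $M_{q,m}$ is the star matrix of a partition of the hypercube ${\bf Z}_q^{(q^m-1)/(q-1)}$ into $q^m$ subcubes, each of dimension $\frac{q^m-1}{q-1}-m$.
   Context: A subcube of ${\bf Z}_q^n$ is obtained by fixing some coordinates and letting the others run through ${\bf Z}_q$; its star pattern is the vector over ${\bf Z}_q\cup\{*\}$ with the fixed values in fixed coordinates and $*$ in free ones. A matrix over ${\bf Z}_q\cup\{*\}$ is the star matrix of a partition if its rows are the star patterns of the subcubes of a partition of ${\bf Z}_q^n$ (each vector in exactly one subcube). The fractal matrices $M_{q,m}$ are defined recursively: $M_{q,0}$ has one row and zero columns; for $m\ge1$, $M_{q,m}$ consists of $q$ horizontal blocks indexed by $a=0,1,\dots,q-1$, each block having $q^{m-1}$ rows; the first column of $M_{q,m}$ has the entry $a$ in every row of block $a$; the remaining columns are divided into $q$ vertical stripes, each of width equal to the number of columns of $M_{q,m-1}$, and in block $a$ the $a$-th vertical stripe (counting from $0$) is a copy of $M_{q,m-1}$ while all other stripes of block $a$ consist only of $*$. *)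

theory Defs
  imports Main
begin

text \<open>Entries of a star matrix: Some a for a value a in Z_q (a < q), None for the star.
  Vectors of Z_q^n are lists of naturals of length n with entries < q.\<close>

definition zq_vectors :: "nat \<Rightarrow> nat \<Rightarrow> nat list set" where
  "zq_vectors q n = {v. length v = n \<and> (\<forall>x\<in>set v. x < q)}"

definition subcube :: "nat \<Rightarrow> nat option list \<Rightarrow> nat list set" where
  "subcube q p = {v. v \<in> zq_vectors q (length p) \<and>
      (\<forall>i < length p. \<forall>c. p ! i = Some c \<longrightarrow> v ! i = c)}"

definition star_dim :: "nat option list \<Rightarrow> nat" where
  "star_dim p = length (filter (\<lambda>x. x = None) p)"

definition is_partition_star_matrix :: "nat \<Rightarrow> nat \<Rightarrow> nat option list list \<Rightarrow> bool" where
  "is_partition_star_matrix q n M \<longleftrightarrow>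
     (\<forall>p\<in>set M. length p = n \<and> (\<forall>c. Some c \<in> set p \<longrightarrow> c < q)) \<and>
     (\<forall>v\<in>zq_vectors q n. \<exists>!i. i < length M \<and> v \<in> subcube q (M ! i))"

fun fractal_width :: "nat \<Rightarrow> nat \<Rightarrow> nat" where
  "fractal_width q 0 = 0"
| "fractal_width q (Suc m) = 1 + q * fractal_width q m"

fun fractal :: "nat \<Rightarrow> nat \<Rightarrow> nat option list list" where
  "fractal q 0 = [[]]"
| "fractal q (Suc m) =
     concat (map (\<lambda>a. map (\<lambda>r. Some a # concat (map (\<lambda>b. if b = a then r
                 else replicate (fractal_width q m) None) [0..<q])) (fractal q m)) [0..<q])"

end

theory Submission
  imports Defs
begin

(* Let w be the width of M_{q,m}. A row r of M_{q,m} becomes, in block a of M_{q,m+1}, the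
   pattern  a, w*a stars, r, w*(q-1-a) stars.  So a vector x # u of Z_q^(1+qw) lies in this
   subcube iff x = a and the a-th length-w block of u lies in the subcube of r. By induction,
   x # u is therefore covered exactly once: in block x, by the unique row of M_{q,m} covering
   the x-th block of u. Each such row has (q-1)w more stars than r, and the width satisfies
   w_{m+1} = 1 + q w_m, hence w_m (q-1) + 1 = q^m. *)

lemma concat_map_const_replicate:
  "a \<notin> set bs \<Longrightarrow>
   concat (map (\<lambda>b. if b = a then r else replicate n x) bs) = replicate (length bs * n) x"
  by (induction bs) (auto simp: replicate_add)

lemma concat_map_if_upt:
  assumes "a < k" and "length r = n"
  shows "concat (map (\<lambda>b. if b = a then r else replicate n x) [0..<k]) =
    replicate (a * n) x @ r @ replicate ((k - Suc a) * n) x"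
proof -
  have "[0..<k] = [0..<a] @ a # [Suc a..<k]"
    using assms upt_add_eq_append[of 0 a "k - a"] by (simp add: upt_conv_Cons)
  then show ?thesis
    by (simp add: concat_map_const_replicate)
qed

lemma block_lengths_sum:
  assumes "a < q"
  shows "a * w + (w + (q - Suc a) * w) = q * (w::nat)"
proof -
  have "a * w + (w + (q - Suc a) * w) = (a + 1 + (q - Suc a)) * w"
    by (simp add: algebra_simps)
  also have "a + 1 + (q - Suc a) = q"
    using assms by simp
  finally show ?thesis .
qed

lemma subcube_conv_list_all2:
  "v \<in> subcube q p \<longleftrightarrow> list_all2 (\<lambda>e x. x < q \<and> (\<forall>c. e = Some c \<longrightarrow> x = c)) p v"
  unfolding subcube_def zq_vectors_def list_all2_conv_all_nth
  by (auto simp: all_set_conv_all_nth)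

lemma Cons_in_subcube_Cons_iff:
  "x # v \<in> subcube q (e # p) \<longleftrightarrow> x < q \<and> (\<forall>c. e = Some c \<longrightarrow> x = c) \<and> v \<in> subcube q p"
  unfolding subcube_conv_list_all2 by simp

lemma subcube_append_iff:
  "v \<in> subcube q (p @ p') \<longleftrightarrow>
   take (length p) v \<in> subcube q p \<and> drop (length p) v \<in> subcube q p'"
  unfolding subcube_conv_list_all2 list_all2_append1
  by (smt (verit, best) append_eq_conv_conj list_all2_lengthD)

lemma subcube_replicate_None: "subcube q (replicate n None) = zq_vectors q n"
  unfolding subcube_def by auto

definition fractal_row :: "nat \<Rightarrow> nat \<Rightarrow> nat \<Rightarrow> nat option list \<Rightarrow> nat option list" where
  "fractal_row q w a r = Some a # replicate (a * w) None @ r @ replicate ((q - Suc a) * w) None"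

lemma length_fractal_rows: "p \<in> set (fractal q m) \<Longrightarrow> length p = fractal_width q m"
proof (induction m arbitrary: p)
  case 0
  then show ?case by simp
next
  case (Suc m)
  then obtain a r where "a < q" "r \<in> set (fractal q m)" and
    p: "p = Some a # concat (map (\<lambda>b. if b = a then r else replicate (fractal_width q m) None) [0..<q])"
    by auto
  moreover have "length r = fractal_width q m"
    using Suc.IH \<open>r \<in> set (fractal q m)\<close> .
  ultimately show ?case
    by (simp add: concat_map_if_upt block_lengths_sum)
qed

lemma fractal_Suc_conv_fractal_row:
  "fractal q (Suc m) = concat (map (\<lambda>a. map (fractal_row q (fractal_width q m) a) (fractal q m)) [0..<q])"
  unfolding fractal.simps fractal_row_def
  by (intro arg_cong[where f = concat] map_cong refl)
     (simp add: concat_map_if_upt length_fractal_rows)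

declare fractal.simps(2) [simp del]

lemma set_fractal_Suc:
  "set (fractal q (Suc m)) =
   {fractal_row q (fractal_width q m) a r | a r. a < q \<and> r \<in> set (fractal q m)}"
  unfolding fractal_Suc_conv_fractal_row by fastforce

lemma length_fractal: "length (fractal q m) = q ^ m"
  by (induction m) (simp_all add: fractal_Suc_conv_fractal_row length_concat comp_def sum_list_triv)

lemma fractal_entries_less: "p \<in> set (fractal q m) \<Longrightarrow> Some c \<in> set p \<Longrightarrow> c < q"
  by (induction m arbitrary: p) (auto simp: set_fractal_Suc fractal_row_def)

lemma fractal_width_ge:
  assumes "1 \<le> q"
  shows "m \<le> fractal_width q m"
proof (induction m)
  case (Suc m)
  have "fractal_width q m \<le> q * fractal_width q m"
    using mult_le_mono1[OF assms, of "fractal_width q m"] by simp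
  with Suc.IH have "Suc m \<le> Suc (q * fractal_width q m)"
    by linarith
  then show ?case by simp
qed simp

lemma star_dim_fractal_rows:
  assumes "1 \<le> q" and "p \<in> set (fractal q m)"
  shows "star_dim p = fractal_width q m - m"
  using assms(2)
proof (induction m arbitrary: p)
  case 0
  then show ?case by (simp add: star_dim_def)
next
  case (Suc m)
  define w where "w = fractal_width q m"
  from Suc.prems obtain a r where "a < q" "r \<in> set (fractal q m)"
    and p: "p = fractal_row q w a r"
    unfolding set_fractal_Suc w_def by blast
  have "star_dim r = w - m" and "m \<le> w"
    using Suc.IH \<open>r \<in> set (fractal q m)\<close> fractal_width_ge[OF assms(1)] by (auto simp: w_def)
  moreover have "star_dim p = a * w + (star_dim r + (q - Suc a) * w)"
    by (simp add: p fractal_row_def star_dim_def filter_replicate)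
  moreover have "fractal_width q (Suc m) = Suc (q * w)"
    by (simp add: w_def)
  ultimately show ?case
    using block_lengths_sum[OF \<open>a < q\<close>, of w] by linarith
qed

lemma subcube_fractal_row_iff:
  assumes v: "v \<in> zq_vectors q (Suc (q * w))" and "a < q" and "length r = w"
  shows "v \<in> subcube q (fractal_row q w a r) \<longleftrightarrow>
    hd v = a \<and> take w (drop (Suc (a * w)) v) \<in> subcube q r"
proof -
  obtain x u where v_eq: "v = x # u" and "x < q" and u: "u \<in> zq_vectors q (q * w)"
    using v by (cases v) (auto simp: zq_vectors_def)
  have "a * w \<le> q * w" and "q * w - a * w - w = (q - Suc a) * w"
    using block_lengths_sum[OF \<open>a < q\<close>, of w] by linarith+
  then have "u \<in> subcube q (replicate (a * w) None @ r @ replicate ((q - Suc a) * w) None) \<longleftrightarrow>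
      take w (drop (a * w) u) \<in> subcube q r"
    using u \<open>length r = w\<close>
    by (auto simp: subcube_append_iff subcube_replicate_None zq_vectors_def
        dest: in_set_takeD in_set_dropD)
  then show ?thesis
    using \<open>x < q\<close> by (simp add: v_eq fractal_row_def Cons_in_subcube_Cons_iff)
qed

lemma length_filter_subcube_fractal:
  "v \<in> zq_vectors q (fractal_width q m) \<Longrightarrow>
   length (filter (\<lambda>p. v \<in> subcube q p) (fractal q m)) = 1"
proof (induction m arbitrary: v)
  case 0
  then show ?case by (simp add: zq_vectors_def subcube_def)
next
  case (Suc m)
  define w where "w = fractal_width q m"
  have v: "v \<in> zq_vectors q (Suc (q * w))"
    using Suc.prems by (simp add: w_def)
  then have "hd v < q"
    by (cases v) (auto simp: zq_vectors_def)
  have block_count: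
    "length (filter (\<lambda>r. v \<in> subcube q (fractal_row q w a r)) (fractal q m)) =
     (if a = hd v then 1 else 0)" if "a < q" for a
  proof -
    define u where "u = take w (drop (Suc (a * w)) v)"
    have "Suc (a * w) + w \<le> Suc (q * w)"
      using block_lengths_sum[OF that, of w] by linarith
    then have "u \<in> zq_vectors q w"
      using v by (auto simp: u_def zq_vectors_def dest: in_set_takeD in_set_dropD)
    moreover have "filter (\<lambda>r. v \<in> subcube q (fractal_row q w a r)) (fractal q m) =
        filter (\<lambda>r. hd v = a \<and> u \<in> subcube q r) (fractal q m)"
      using subcube_fractal_row_iff[OF v that] length_fractal_rows
      by (auto simp: u_def w_def intro: filter_cong)
    ultimately show ?thesis
      using Suc.IH by (simp add: w_def)
  qed
  have "length (filter (\<lambda>p. v \<in> subcube q p) (fractal q (Suc m))) =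
      (\<Sum>a\<leftarrow>[0..<q]. length (filter (\<lambda>r. v \<in> subcube q (fractal_row q w a r)) (fractal q m)))"
    by (simp add: fractal_Suc_conv_fractal_row w_def filter_concat length_concat comp_def filter_map)
  also have "\<dots> = (\<Sum>a\<leftarrow>[0..<q]. if a = hd v then 1 else 0)"
    using block_count by (intro arg_cong[where f = sum_list] map_cong) auto
  also have "\<dots> = 1"
    using \<open>hd v < q\<close> by (simp flip: sum_set_upt_conv_sum_list_nat)
  finally show ?case .
qed

lemma fractal_width_Suc_mult: "fractal_width (Suc p) m * p + 1 = Suc p ^ m"
proof (induction m)
  case (Suc m)
  have "fractal_width (Suc p) (Suc m) * p + 1 = Suc p * (fractal_width (Suc p) m * p + 1)"
    by (simp add: algebra_simps)
  with Suc.IH show ?case by simp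
qed simp

lemma fractal_width_eq_div:
  assumes "1 < q"
  shows "fractal_width q m = (q ^ m - 1) div (q - 1)"
proof -
  obtain p where "q = Suc p" and "p \<noteq> 0"
    using assms by (cases q) auto
  then show ?thesis
    using fractal_width_Suc_mult[of p m] by (metis add_diff_cancel_right' diff_Suc_1 nonzero_mult_div_cancel_right)
qed

lemma ex1_index_if_length_filter_eq_1:
  assumes "length (filter P xs) = 1"
  shows "\<exists>!i. i < length xs \<and> P (xs ! i)"
proof -
  obtain j where "{i. i < length xs \<and> P (xs ! i)} = {j}"
    using assms by (auto simp: length_filter_conv_card card_1_singleton_iff)
  then show ?thesis
    by (metis (mono_tags, lifting) insertI1 mem_Collect_eq singletonD)
qed

theorem mainTheorem7:
  fixes q m :: nat
  assumes "q \<ge> 2" and "m \<ge> 1"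
  shows "is_partition_star_matrix q ((q ^ m - 1) div (q - 1)) (fractal q m) \<and>
         length (fractal q m) = q ^ m \<and>
         (\<forall>p\<in>set (fractal q m). star_dim p = (q ^ m - 1) div (q - 1) - m)"
proof -
  have "(q ^ m - 1) div (q - 1) = fractal_width q m"
    using assms(1) by (simp add: fractal_width_eq_div)
  moreover have "\<forall>p\<in>set (fractal q m). length p = fractal_width q m \<and> (\<forall>c. Some c \<in> set p \<longrightarrow> c < q)"
    using length_fractal_rows fractal_entries_less by blast
  moreover have "\<forall>v\<in>zq_vectors q (fractal_width q m).
      \<exists>!i. i < length (fractal q m) \<and> v \<in> subcube q (fractal q m ! i)"
    by (intro ballI ex1_index_if_length_filter_eq_1 length_filter_subcube_fractal)
  moreover have "\<forall>p\<in>set (fractal q m). star_dim p = fractal_width q m - m"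
    using assms(1) star_dim_fractal_rows by simp
  ultimately show ?thesis
    unfolding is_partition_star_matrix_def by (simp add: length_fractal)
qed

end
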